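(* Let $f\in H^p(\mathbb B)$ and $n\in\mathbb N$. If $1\le p<\infty$ then $$|f^{(n)}(0)|\le\sqrt2\,n!\,e^{1/p}\Big(1+\frac{np}{2}\Big)^{1/p}\|f\|_p,$$ and if $p=\infty$ then $|f^{(n)}(0)|\le n!\,\|f\|_\infty$.
   Context: $\mathbb H$ quaternions, $\mathbb S=\{q:q^2=-1\}$, $\mathbb B$ open unit ball. Slice regular functions on $\mathbb B$ are exactly convergent power series $f(q)=\sum_nq^na_n$, and $f^{(n)}=\partial^nf/\partial x^n$ denotes the $n$-th slice derivative, so $a_n=f^{(n)}(0)/n!$. Hardy spaces: $\|f\|_p=\sup_{I\in\mathbb S}\lim_{r\to1^-}(\frac1{2\pi}\int_{-\pi}^\pi|f(re^{I\theta})|^pd\theta)^{1/p}$ for $p<\infty$, $\|f\|_\infty=\sup_{\mathbb B}|f|$, $H^p(\mathbb B)=\{f$ regular on $\mathbb B:\|f\|_p<\infty\}$. *)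

theory Defs
  imports "HOL-Analysis.Analysis"
begin

codatatype quat = Quat (QRe: real) (QI: real) (QJ: real) (QK: real)

lemma quat_eq_iff: "x = y \<longleftrightarrow> QRe x = QRe y \<and> QI x = QI y \<and> QJ x = QJ y \<and> QK x = QK y"
  by (auto intro: quat.expand)

instantiation quat :: ab_group_add
begin
primcorec zero_quat where "QRe 0 = 0" | "QI 0 = 0" | "QJ 0 = 0" | "QK 0 = 0"
primcorec plus_quat where
  "QRe (x + y) = QRe x + QRe y" | "QI (x + y) = QI x + QI y"
| "QJ (x + y) = QJ x + QJ y" | "QK (x + y) = QK x + QK y"
primcorec uminus_quat where
  "QRe (- x) = - QRe x" | "QI (- x) = - QI x" | "QJ (- x) = - QJ x" | "QK (- x) = - QK x"
primcorec minus_quat where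
  "QRe (x - y) = QRe x - QRe y" | "QI (x - y) = QI x - QI y"
| "QJ (x - y) = QJ x - QJ y" | "QK (x - y) = QK x - QK y"
instance by standard (simp_all add: quat_eq_iff)
end

instantiation quat :: ring_1
begin
primcorec one_quat where "QRe 1 = 1" | "QI 1 = 0" | "QJ 1 = 0" | "QK 1 = 0"
primcorec times_quat where
  "QRe (x * y) = QRe x * QRe y - QI x * QI y - QJ x * QJ y - QK x * QK y"
| "QI (x * y) = QRe x * QI y + QI x * QRe y + QJ x * QK y - QK x * QJ y"
| "QJ (x * y) = QRe x * QJ y - QI x * QK y + QJ x * QRe y + QK x * QI y"
| "QK (x * y) = QRe x * QK y + QI x * QJ y - QJ x * QI y + QK x * QRe y"
instance by standard (simp_all add: quat_eq_iff algebra_simps)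
end

instantiation quat :: real_algebra_1
begin
primcorec scaleR_quat where
  "QRe (scaleR r x) = r * QRe x" | "QI (scaleR r x) = r * QI x"
| "QJ (scaleR r x) = r * QJ x" | "QK (scaleR r x) = r * QK x"
instance by standard (simp_all add: quat_eq_iff algebra_simps)
end

instantiation quat :: real_normed_algebra_1
begin
definition norm_quat_def:
  "norm x = sqrt ((QRe x)\<^sup>2 + (QI x)\<^sup>2 + (QJ x)\<^sup>2 + (QK x)\<^sup>2)"
definition sgn_quat_def: "sgn x = x /\<^sub>R norm x" for x :: quat
definition dist_quat_def: "dist x y = norm (x - y)" for x y :: quat
definition uniformity_quat_def:
  "(uniformity :: (quat \<times> quat) filter) = (INF e\<in>{0 <..}. principal {(x, y). dist x y < e})"
definition open_quat_def:
  "open (U :: quat set) \<longleftrightarrow> (\<forall>x\<in>U. eventually (\<lambda>(x', y). x' = x \<longrightarrow> y \<in> U) uniformity)"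

lemma quat_norm_mult_sq:
  "((QRe (x*y))\<^sup>2 + (QI (x*y))\<^sup>2 + (QJ (x*y))\<^sup>2 + (QK (x*y))\<^sup>2)
   = ((QRe x)\<^sup>2 + (QI x)\<^sup>2 + (QJ x)\<^sup>2 + (QK x)\<^sup>2) * ((QRe y)\<^sup>2 + (QI y)\<^sup>2 + (QJ y)\<^sup>2 + (QK y)\<^sup>2)"
  for x y :: quat
  by (simp add: power2_eq_square algebra_simps)

instance
proof
  fix r :: real and x y :: quat
  show "(norm x = 0) = (x = 0)"
    by (simp add: norm_quat_def quat_eq_iff add_nonneg_eq_0_iff)
  show "norm (x + y) \<le> norm x + norm y"
  proof -
    have "norm (x + y) = L2_set (\<lambda>i. [QRe x + QRe y, QI x + QI y, QJ x + QJ y, QK x + QK y] ! i) {0..<4}"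
      by (simp add: norm_quat_def L2_set_def numeral_eq_Suc add.assoc)
    also have "\<dots> \<le> L2_set (\<lambda>i. [QRe x, QI x, QJ x, QK x] ! i) {0..<4}
                  + L2_set (\<lambda>i. [QRe y, QI y, QJ y, QK y] ! i) {0..<4}"
      using L2_set_triangle_ineq[of "\<lambda>i. [QRe x, QI x, QJ x, QK x] ! i"
            "\<lambda>i. [QRe y, QI y, QJ y, QK y] ! i" "{0..<4}"]
      by (simp add: numeral_eq_Suc L2_set_def add.assoc)
    also have "\<dots> = norm x + norm y"
      by (simp add: norm_quat_def L2_set_def numeral_eq_Suc add.assoc)
    finally show ?thesis .
  qed
  show "norm (scaleR r x) = \<bar>r\<bar> * norm x"
    by (simp add: norm_quat_def power_mult_distrib distrib_left [symmetric] real_sqrt_mult)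
  show "norm (x * y) \<le> norm x * norm y"
    unfolding norm_quat_def quat_norm_mult_sq real_sqrt_mult by simp
  show "norm (1::quat) = 1"
    by (simp add: norm_quat_def)
qed (rule sgn_quat_def dist_quat_def open_quat_def uniformity_quat_def)+
end

definition qball :: "quat set" where
  "qball = {q. norm q < 1}"

definition imag_units :: "quat set" where
  "imag_units = {q. q * q = - 1}"

text \<open>Slice regular functions on the ball: exactly the convergent power series
  f(q) = sum q^n a_n (coefficients on the right).\<close>
definition slice_regular_ball :: "(quat \<Rightarrow> quat) \<Rightarrow> bool" where
  "slice_regular_ball f \<longleftrightarrow> (\<exists>a :: nat \<Rightarrow> quat. \<forall>q\<in>qball. (\<lambda>n. q ^ n * a n) sums f q)"

text \<open>Slice derivative: the derivative along the real direction x, i.e. df/dx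
  on the slice through q (adding a real number stays in the same slice).\<close>
definition slice_deriv :: "(quat \<Rightarrow> quat) \<Rightarrow> quat \<Rightarrow> quat" where
  "slice_deriv f q = vector_derivative (\<lambda>t::real. f (q + of_real t)) (at 0)"

definition integral_mean :: "real \<Rightarrow> (quat \<Rightarrow> quat) \<Rightarrow> quat \<Rightarrow> real \<Rightarrow> real" where
  "integral_mean p f I r =
     ((1 / (2 * pi)) * integral {-pi..pi}
        (\<lambda>\<theta>. (norm (f (r *\<^sub>R (of_real (cos \<theta>) + I * of_real (sin \<theta>))))) powr p)) powr (1 / p)"

definition hardy_norm :: "real \<Rightarrow> (quat \<Rightarrow> quat) \<Rightarrow> ereal" where
  "hardy_norm p f = (SUP I\<in>imag_units. Lim (at_left (1::real)) (\<lambda>r. ereal (integral_mean p f I r)))"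

definition hardy_norm_inf :: "(quat \<Rightarrow> quat) \<Rightarrow> ereal" where
  "hardy_norm_inf f = (SUP q\<in>qball. ereal (norm (f q)))"

end

theory Submission
  imports Defs
begin

text \<open>Write f(q) = \<Sum>n. q^n a_n. The n-th slice derivative of f at 0 is n! a_n, so it suffices
  to show |a_n| \<le> \<parallel>f\<parallel>_p; the constant in the statement is at least 1. On the slice through i we split
  f = F + G j with complex power series F, G, so that |f| = sqrt (|F|^2 + |G|^2). Pairing (F, G) with
  a unit vector of \<complex>^2 that norms the pair of coefficients of z^n turns the Cauchy coefficient
  formula into |a_n| r^n \<le> M_1(r), and Jensen's inequality gives M_1(r) \<le> M_p(r) for the integral
  means on the circle of radius r. The Hardy norm is a limit r \<rightarrow> 1, which exists because M_p is
  nondecreasing: the same pairing bounds |f(\<rho> s e^(i\<theta>))| by the Poisson integral of |f| over the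
  circle of radius s, and Jensen's inequality together with Fubini turns this into M_p(\<rho> s) \<le> M_p(s).\<close>

lemma bounded_linear_quat_components:
  "bounded_linear QRe" "bounded_linear QI" "bounded_linear QJ" "bounded_linear QK"
  by (rule bounded_linear_intro[where K=1]; auto simp: norm_quat_def intro: real_le_rsqrt)+

definition quat_i :: quat where "quat_i = Quat 0 1 0 0"
definition quat_j :: quat where "quat_j = Quat 0 0 1 0"
definition quat_k :: quat where "quat_k = Quat 0 0 0 1"

lemma quat_eq_components: "x = QRe x *\<^sub>R 1 + QI x *\<^sub>R quat_i + QJ x *\<^sub>R quat_j + QK x *\<^sub>R quat_k"
  by (simp add: quat_eq_iff quat_i_def quat_j_def quat_k_def)

lemma quat_i_imag_unit: "quat_i \<in> imag_units"
  by (simp add: imag_units_def quat_eq_iff quat_i_def)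

lemma sums_quat_componentwise:
  assumes "(\<lambda>k. QRe (X k)) sums QRe s" "(\<lambda>k. QI (X k)) sums QI s"
    and "(\<lambda>k. QJ (X k)) sums QJ s" "(\<lambda>k. QK (X k)) sums QK s"
  shows "X sums s"
proof -
  have "(\<lambda>k. QRe (X k) *\<^sub>R 1 + QI (X k) *\<^sub>R quat_i + QJ (X k) *\<^sub>R quat_j + QK (X k) *\<^sub>R quat_k)
          sums (QRe s *\<^sub>R 1 + QI s *\<^sub>R quat_i + QJ s *\<^sub>R quat_j + QK s *\<^sub>R quat_k)"
    by (intro sums_add sums_scaleR_left assms)
  then show ?thesis
    by (simp flip: quat_eq_components)
qed

lemma summable_quat_componentwise:
  assumes "summable (\<lambda>k. QRe (X k))" "summable (\<lambda>k. QI (X k))"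
    and "summable (\<lambda>k. QJ (X k))" "summable (\<lambda>k. QK (X k))"
  shows "summable X"
proof -
  have "X sums Quat (\<Sum>k. QRe (X k)) (\<Sum>k. QI (X k)) (\<Sum>k. QJ (X k)) (\<Sum>k. QK (X k))"
    by (rule sums_quat_componentwise) (simp_all add: summable_sums assms)
  then show ?thesis
    by (rule sums_summable)
qed

lemma has_vector_derivative_quat_componentwise:
  assumes "((\<lambda>y. QRe (h y)) has_real_derivative QRe d) (at x)"
    and "((\<lambda>y. QI (h y)) has_real_derivative QI d) (at x)"
    and "((\<lambda>y. QJ (h y)) has_real_derivative QJ d) (at x)"
    and "((\<lambda>y. QK (h y)) has_real_derivative QK d) (at x)"
  shows "(h has_vector_derivative d) (at x)"
proof -
  have "((\<lambda>y. QRe (h y) *\<^sub>R 1 + QI (h y) *\<^sub>R quat_i + QJ (h y) *\<^sub>R quat_j + QK (h y) *\<^sub>R quat_k)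
          has_vector_derivative (QRe d *\<^sub>R 1 + QI d *\<^sub>R quat_i + QJ d *\<^sub>R quat_j + QK d *\<^sub>R quat_k)) (at x)"
    using assms by (intro derivative_eq_intros) (auto simp: has_real_derivative_iff_has_vector_derivative)
  then show ?thesis
    by (simp flip: quat_eq_components)
qed

section \<open>Power series in a real variable with quaternion coefficients\<close>

definition real_powser :: "(nat \<Rightarrow> quat) \<Rightarrow> real \<Rightarrow> quat" where
  "real_powser b y = (\<Sum>k. y ^ k *\<^sub>R b k)"

lemma of_nat_mult_eq_scaleR: "of_nat m * x = real m *\<^sub>R x" for x :: "'a::real_algebra_1"
  by (simp add: scaleR_conv_of_real)

lemma diffs_bounded_linear:
  fixes g :: "quat \<Rightarrow> 'a::real_normed_algebra_1"
  assumes "bounded_linear g"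
  shows "diffs (\<lambda>k. g (b k)) = (\<lambda>k. g (diffs b k))"
  using linear.scaleR[OF bounded_linear.linear[OF assms]]
  by (simp add: diffs_def fun_eq_iff of_nat_mult_eq_scaleR del: of_nat_Suc)

lemma funpow_diffs:
  fixes b :: "nat \<Rightarrow> 'a::real_algebra_1"
  shows "(diffs ^^ n) b k = (fact (k + n) / fact k) *\<^sub>R b (k + n)"
proof (induction n arbitrary: k)
  case (Suc n)
  have "(diffs ^^ Suc n) b k = of_nat (Suc k) * ((fact (Suc k + n) / fact (Suc k)) *\<^sub>R b (Suc k + n))"
    by (simp only: funpow.simps o_apply diffs_def Suc)
  also have "\<dots> = real (Suc k) *\<^sub>R ((fact (Suc k + n) / fact (Suc k)) *\<^sub>R b (Suc k + n))"
    by (rule of_nat_mult_eq_scaleR)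
  also have "\<dots> = (fact (k + Suc n) / fact k) *\<^sub>R b (k + Suc n)"
    by (simp del: of_nat_Suc)
  finally show ?case .
qed simp

lemma real_powser_component_sums:
  assumes "summable (\<lambda>k. y ^ k *\<^sub>R b k)" "bounded_linear g"
  shows "(\<lambda>k. g (b k) * y ^ k) sums g (real_powser b y)"
  using bounded_linear.sums[OF assms(2) summable_sums[OF assms(1)]]
    linear.scaleR[OF bounded_linear.linear[OF assms(2)]]
  by (simp add: real_powser_def mult.commute)

lemma summable_real_powser_diffs:
  fixes b :: "nat \<Rightarrow> quat"
  assumes conv: "\<And>y. \<bar>y\<bar> < 1 \<Longrightarrow> summable (\<lambda>k. y ^ k *\<^sub>R b k)" and x: "\<bar>x\<bar> < 1"
  shows "summable (\<lambda>k. x ^ k *\<^sub>R diffs b k)"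
proof -
  have "summable (\<lambda>k. g (x ^ k *\<^sub>R diffs b k))" if g: "bounded_linear g" for g :: "quat \<Rightarrow> real"
  proof -
    have "summable (\<lambda>k. g (b k) * y ^ k)" if "\<bar>y\<bar> < 1" for y
      using real_powser_component_sums[OF conv[OF that] g] by (rule sums_summable)
    then have "summable (\<lambda>k. diffs (\<lambda>k. g (b k)) k * x ^ k)"
      using x by (intro termdiff_converges[of x 1]) auto
    then show ?thesis
      using linear.scaleR[OF bounded_linear.linear[OF g]]
      by (simp add: diffs_bounded_linear[OF g] mult.commute)
  qed
  then show ?thesis
    using bounded_linear_quat_components by (intro summable_quat_componentwise)
qed

lemma has_real_derivative_real_powser_component:
  fixes g :: "quat \<Rightarrow> real"
  assumes conv: "\<And>y. \<bar>y\<bar> < 1 \<Longrightarrow> summable (\<lambda>k. y ^ k *\<^sub>R b k)"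
    and g: "bounded_linear g" and x: "\<bar>x\<bar> < 1"
  shows "((\<lambda>y. g (real_powser b y)) has_real_derivative g (real_powser (diffs b) x)) (at x)"
proof -
  have sums: "(\<lambda>k. g (b k) * y ^ k) sums g (real_powser b y)" if "\<bar>y\<bar> < 1" for y
    by (rule real_powser_component_sums[OF conv[OF that] g])
  have "\<bar>(1 + \<bar>x\<bar>) / 2\<bar> < 1"
    using x by auto
  then have "((\<lambda>y. \<Sum>k. g (b k) * y ^ k) has_real_derivative (\<Sum>k. diffs (\<lambda>k. g (b k)) k * x ^ k)) (at x)"
    using x by (intro termdiffs_strong[of _ "(1 + \<bar>x\<bar>) / 2"] sums_summable[OF sums]) auto
  also have "(\<Sum>k. diffs (\<lambda>k. g (b k)) k * x ^ k) = g (real_powser (diffs b) x)"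
    using real_powser_component_sums[OF summable_real_powser_diffs[OF conv x] g]
    by (simp add: diffs_bounded_linear[OF g] sums_iff)
  finally show ?thesis
    by (rule has_field_derivative_transform_within_open[where S = "{-1<..<1}"])
       (use x sums in \<open>auto simp: sums_iff\<close>)
qed

lemma has_vector_derivative_real_powser:
  assumes "\<And>y. \<bar>y\<bar> < 1 \<Longrightarrow> summable (\<lambda>k. y ^ k *\<^sub>R b k)" and "\<bar>x\<bar> < 1"
  shows "(real_powser b has_vector_derivative real_powser (diffs b) x) (at x)"
  using bounded_linear_quat_components
  by (intro has_vector_derivative_quat_componentwise has_real_derivative_real_powser_component assms)

lemma slice_deriv_of_real:
  assumes conv: "\<And>y. \<bar>y\<bar> < 1 \<Longrightarrow> summable (\<lambda>k. y ^ k *\<^sub>R b k)"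
    and g: "\<And>y. \<bar>y\<bar> < 1 \<Longrightarrow> g (of_real y) = real_powser b y" and x: "\<bar>x\<bar> < 1"
  shows "slice_deriv g (of_real x) = real_powser (diffs b) x"
proof -
  have "((real_powser b \<circ> (\<lambda>t. x + t)) has_vector_derivative (1::real) *\<^sub>R real_powser (diffs b) x) (at 0)"
    by (rule vector_diff_chain_at) (use has_vector_derivative_real_powser[OF conv x] in
        \<open>auto intro!: derivative_eq_intros\<close>)
  then have "((\<lambda>t. real_powser b (x + t)) has_vector_derivative real_powser (diffs b) x) (at 0)"
    by (simp add: o_def)
  then have "((\<lambda>t. g (of_real x + of_real t)) has_vector_derivative real_powser (diffs b) x) (at 0)"
  proof (rule has_vector_derivative_transform_within_open[where S = "ball 0 (1 - \<bar>x\<bar>)"], simp_all add: x)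
    fix t :: real
    assume "\<bar>t\<bar> < 1 - \<bar>x\<bar>"
    then show "real_powser b (x + t) = g (of_real x + of_real t)"
      using g[of "x + t"] by (simp flip: of_real_add)
  qed
  then show ?thesis
    unfolding slice_deriv_def by (rule vector_derivative_at)
qed

lemma slice_deriv_funpow_of_real:
  assumes f: "\<forall>q\<in>qball. (\<lambda>n. q ^ n * a n) sums f q" and y: "\<bar>y\<bar> < 1"
  shows "summable (\<lambda>k. y ^ k *\<^sub>R (diffs ^^ m) a k)
    \<and> (slice_deriv ^^ m) f (of_real y) = real_powser ((diffs ^^ m) a) y"
  using y
proof (induction m arbitrary: y)
  case 0
  have "of_real y \<in> qball"
    using 0 by (simp add: qball_def)
  then have "(\<lambda>n. y ^ n *\<^sub>R a n) sums f (of_real y)"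
    using f by (auto simp: scaleR_conv_of_real of_real_power)
  then show ?case
    by (simp add: real_powser_def sums_iff)
next
  case (Suc m)
  then show ?case
    by (simp add: summable_real_powser_diffs slice_deriv_of_real)
qed

lemma real_powser_zero: "real_powser b 0 = b 0"
  unfolding real_powser_def by (subst suminf_finite[of "{0}"]) auto

lemma slice_deriv_funpow_zero:
  assumes "\<forall>q\<in>qball. (\<lambda>n. q ^ n * a n) sums f q"
  shows "(slice_deriv ^^ n) f 0 = fact n *\<^sub>R a n"
  using slice_deriv_funpow_of_real[OF assms, of 0 n] by (simp add: real_powser_zero funpow_diffs)

section \<open>Trigonometric series and the Poisson kernel\<close>

lemma has_integral_suminf:
  fixes u :: "nat \<Rightarrow> real \<Rightarrow> 'a::banach"
  assumes bound: "\<And>k x. x \<in> {a..b} \<Longrightarrow> norm (u k x) \<le> M k" and "summable M"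
    and cont: "\<And>k. continuous_on {a..b} (u k)"
    and int: "\<And>k. (u k has_integral I k) {a..b}"
  shows "((\<lambda>x. \<Sum>k. u k x) has_integral (\<Sum>k. I k)) {a..b}"
proof -
  have "uniform_limit {a..b} (\<lambda>n x. \<Sum>k<n. u k x) (\<lambda>x. \<Sum>k. u k x) sequentially"
    by (rule Weierstrass_m_test[OF bound \<open>summable M\<close>])
  moreover have "\<And>n. continuous_on {a..b} (\<lambda>x. \<Sum>k<n. u k x)"
    by (intro continuous_intros cont)
  ultimately obtain In J where In: "\<And>n. ((\<lambda>x. \<Sum>k<n. u k x) has_integral In n) {a..b}"
    and J: "((\<lambda>x. \<Sum>k. u k x) has_integral J) {a..b}" and "In \<longlonglongrightarrow> J"
    by (rule uniform_limit_integral) auto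
  moreover have "In = (\<lambda>n. \<Sum>k<n. I k)"
    by (rule ext, rule has_integral_unique[OF In]) (intro has_integral_sum int, simp)
  ultimately have "I sums J"
    by (simp add: sums_def)
  with J show ?thesis
    by (simp add: sums_unique[symmetric])
qed

lemma has_integral_cis_int:
  "((\<lambda>x. cis (of_int j * x)) has_integral (if j = 0 then complex_of_real (2 * pi) else 0)) {-pi..pi}"
proof (cases "j = 0")
  case True
  then show ?thesis
    using has_integral_const_real[of "1::complex" "-pi" pi] by (simp add: scaleR_conv_of_real)
next
  case False
  define F where "F x = exp (\<i> * of_int j * of_real x) / (\<i> * of_int j)" for x :: real
  have "(F has_vector_derivative cis (of_int j * x)) (at x within {-pi..pi})" for x
  proof -
    have "((\<lambda>z. exp (\<i> * of_int j * z) / (\<i> * of_int j)) has_field_derivative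
           cis (of_int j * x)) (at (of_real x))"
      using False by (auto intro!: derivative_eq_intros simp: cis_conv_exp mult_ac)
    then show ?thesis
      unfolding F_def by (rule has_vector_derivative_real_field)
  qed
  then have "((\<lambda>x. cis (of_int j * x)) has_integral (F pi - F (-pi))) {-pi..pi}"
    by (intro fundamental_theorem_of_calculus) auto
  moreover have "F pi = F (-pi)"
  proof -
    have "exp (\<i> * of_int j * of_real x) = cis (of_int j * x)" for x
      by (simp add: cis_conv_exp mult_ac)
    moreover have "cis (of_int j * pi) = cis (- (of_int j * pi))"
      using sin_npi_int[of j] by (simp add: complex_eq_iff mult.commute)
    ultimately show ?thesis
      unfolding F_def by (metis of_real_minus mult_minus_right)
  qed
  ultimately show ?thesis
    using False by simp
qed

lemma has_integral_cis_series:
  fixes c :: "nat \<Rightarrow> complex" and j :: "nat \<Rightarrow> int"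
  assumes "summable (\<lambda>m. norm (c m))"
  shows "((\<lambda>x. \<Sum>m. c m * cis (of_int (j m) * x)) has_integral
           (\<Sum>m. c m * (if j m = 0 then complex_of_real (2 * pi) else 0))) {-pi..pi}"
proof (rule has_integral_suminf[OF _ assms])
  show "((\<lambda>x. c m * cis (of_int (j m) * x)) has_integral
          c m * (if j m = 0 then complex_of_real (2 * pi) else 0)) {-pi..pi}" for m
    by (rule has_integral_mult_right[OF has_integral_cis_int])
qed (auto simp: norm_mult intro!: continuous_intros)

definition trig_series :: "(nat \<Rightarrow> complex) \<Rightarrow> real \<Rightarrow> complex" where
  "trig_series c x = (\<Sum>k. c k * cis (real k * x))"

lemma summable_trig_series:
  assumes "summable (\<lambda>k. norm (c k))"
  shows "summable (\<lambda>k. c k * cis (real k * x))"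
  by (rule summable_norm_cancel, rule summable_comparison_test'[OF assms]) (simp add: norm_mult)

lemma continuous_on_trig_series:
  assumes "summable (\<lambda>k. norm (c k))"
  shows "continuous_on A (trig_series c)"
proof -
  have "uniform_limit A (\<lambda>n x. \<Sum>k<n. c k * cis (real k * x)) (trig_series c) sequentially"
    unfolding trig_series_def by (rule Weierstrass_m_test[OF _ assms]) (simp add: norm_mult)
  then show ?thesis
    by (rule uniform_limit_theorem[rotated]) (auto intro!: always_eventually continuous_intros)
qed

lemma has_integral_trig_series_coeff:
  assumes c: "summable (\<lambda>k. norm (c k))"
  shows "((\<lambda>x. cis (- (real n * x)) * trig_series c x) has_integral (complex_of_real (2 * pi) * c n))
           {-pi..pi}"
proof -
  have "cis (- (real n * x)) * trig_series c x = (\<Sum>k. c k * cis (of_int (int k - int n) * x))" for x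
    unfolding trig_series_def suminf_mult[OF summable_trig_series[OF c], symmetric]
    by (rule suminf_cong) (simp add: cis_mult algebra_simps)
  moreover have "(\<Sum>k. c k * (if int k - int n = 0 then complex_of_real (2 * pi) else 0))
      = complex_of_real (2 * pi) * c n"
    by (subst suminf_finite[of "{n}"]) auto
  ultimately show ?thesis
    using has_integral_cis_series[OF c, of "\<lambda>k. int k - int n"] by simp
qed

lemma trig_series_linear:
  assumes c: "summable (\<lambda>k. norm (c k))" and d: "summable (\<lambda>k. norm (d k))"
  shows "summable (\<lambda>k. norm (x * c k + y * d k))"
    and "trig_series (\<lambda>k. x * c k + y * d k) \<theta> = x * trig_series c \<theta> + y * trig_series d \<theta>"
proof -
  show "summable (\<lambda>k. norm (x * c k + y * d k))"
    by (rule summable_comparison_test'[OF summable_add[OF summable_mult[OF c, of "norm x"]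
          summable_mult[OF d, of "norm y"]], of 0])
       (simp add: norm_mult norm_triangle_le)
  have "trig_series (\<lambda>k. x * c k + y * d k) \<theta>
      = (\<Sum>k. x * (c k * cis (real k * \<theta>)) + y * (d k * cis (real k * \<theta>)))"
    unfolding trig_series_def by (simp add: algebra_simps)
  also have "\<dots> = (\<Sum>k. x * (c k * cis (real k * \<theta>))) + (\<Sum>k. y * (d k * cis (real k * \<theta>)))"
    by (intro suminf_add[symmetric] summable_mult summable_trig_series c d)
  also have "\<dots> = x * trig_series c \<theta> + y * trig_series d \<theta>"
    unfolding trig_series_def by (simp add: suminf_mult summable_trig_series c d)
  finally show "trig_series (\<lambda>k. x * c k + y * d k) \<theta> = x * trig_series c \<theta> + y * trig_series d \<theta>" .
qed

definition poisson_kernel :: "real \<Rightarrow> real \<Rightarrow> real" where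
  "poisson_kernel \<rho> t = (1 - \<rho>\<^sup>2) / (1 - 2 * \<rho> * cos t + \<rho>\<^sup>2)"

lemma poisson_kernel_denominator_ge:
  fixes \<rho> t :: real
  assumes "0 \<le> \<rho>"
  shows "(1 - \<rho>)\<^sup>2 \<le> 1 - 2 * \<rho> * cos t + \<rho>\<^sup>2"
  using mult_left_le[OF cos_le_one assms, of t] by (simp add: power2_eq_square algebra_simps)

lemma poisson_kernel_denominator_pos:
  fixes \<rho> t :: real
  assumes "0 \<le> \<rho>" "\<rho> < 1"
  shows "0 < 1 - 2 * \<rho> * cos t + \<rho>\<^sup>2"
proof -
  have "0 < (1 - \<rho>)\<^sup>2"
    using assms(2) by simp
  then show ?thesis
    using poisson_kernel_denominator_ge[OF assms(1), of t] by linarith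
qed

lemma poisson_kernel_nonneg: "0 \<le> (\<rho>::real) \<Longrightarrow> \<rho> < 1 \<Longrightarrow> 0 \<le> poisson_kernel \<rho> t"
  unfolding poisson_kernel_def
  by (intro divide_nonneg_pos poisson_kernel_denominator_pos) (auto simp: abs_square_le_1)

lemma poisson_kernel_le:
  assumes "0 \<le> \<rho>" "\<rho> < 1"
  shows "poisson_kernel \<rho> t \<le> (1 - \<rho>\<^sup>2) / (1 - \<rho>)\<^sup>2"
  unfolding poisson_kernel_def using assms
  by (intro divide_left_mono poisson_kernel_denominator_ge mult_pos_pos poisson_kernel_denominator_pos)
     (auto simp: abs_square_le_1)

lemma continuous_on_poisson_kernel:
  fixes g :: "'a::t2_space \<Rightarrow> real"
  assumes "0 \<le> \<rho>" "\<rho> < 1" "continuous_on A g"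
  shows "continuous_on A (\<lambda>x. poisson_kernel \<rho> (g x))"
proof -
  have "1 - 2 * \<rho> * cos t + \<rho>\<^sup>2 \<noteq> 0" for t
    using poisson_kernel_denominator_pos[OF assms(1,2), of t] by linarith
  then show ?thesis
    unfolding poisson_kernel_def using assms(3) by (auto intro!: continuous_intros)
qed

lemma poisson_kernel_minus: "poisson_kernel \<rho> (- t) = poisson_kernel \<rho> t"
  by (simp add: poisson_kernel_def)

lemma poisson_kernel_geometric_expansion:
  assumes "0 \<le> \<rho>" "\<rho> < 1"
  shows "complex_of_real (poisson_kernel \<rho> t)
    = (\<Sum>m. of_real (\<rho> ^ m) * cis (real m * t)) + (\<Sum>m. of_real (\<rho> ^ Suc m) * cis (- (real (Suc m) * t)))"
proof -
  define z where "z = complex_of_real \<rho> * cis t"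
  have z: "norm z < 1" "norm (cnj z) < 1"
    using assms by (simp_all add: z_def norm_mult)
  have "(\<lambda>m. of_real (\<rho> ^ m) * cis (real m * t)) = (\<lambda>m. z ^ m)"
    by (simp add: z_def power_mult_distrib Complex.DeMoivre)
  then have "(\<lambda>m. of_real (\<rho> ^ m) * cis (real m * t)) sums (1 / (1 - z))"
    using geometric_sums[OF z(1)] by simp
  moreover have "(\<lambda>m. of_real (\<rho> ^ Suc m) * cis (- (real (Suc m) * t))) = (\<lambda>m. cnj z * cnj z ^ m)"
  proof
    fix m
    have "cnj z * cnj z ^ m = of_real (\<rho> ^ Suc m) * cis (- t) ^ Suc m"
      by (simp add: z_def cis_cnj power_mult_distrib mult_ac)
    then show "of_real (\<rho> ^ Suc m) * cis (- (real (Suc m) * t)) = cnj z * cnj z ^ m"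
      by (simp only: Complex.DeMoivre) simp
  qed
  then have "(\<lambda>m. of_real (\<rho> ^ Suc m) * cis (- (real (Suc m) * t))) sums (cnj z * (1 / (1 - cnj z)))"
    using sums_mult[OF geometric_sums[OF z(2)], of "cnj z"] by simp
  moreover have "1 / (1 - z) + cnj z * (1 / (1 - cnj z)) = complex_of_real (poisson_kernel \<rho> t)"
  proof -
    have "1 - z \<noteq> 0" "1 - cnj z \<noteq> 0"
      using z by auto
    then have "1 / (1 - z) + cnj z * (1 / (1 - cnj z)) = (1 - z * cnj z) / ((1 - z) * (1 - cnj z))"
      by (simp add: field_simps)
    also have "\<dots> = complex_of_real (1 - \<rho>\<^sup>2) / complex_of_real (1 - 2 * \<rho> * cos t + \<rho>\<^sup>2)"
    proof -
      have sc: "\<rho> * (\<rho> * (cos t * cos t)) + \<rho> * (\<rho> * (sin t * sin t)) = \<rho> * \<rho>"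
        by (metis distrib_left mult_1_right sin_cos_squared_add3)
      have "1 - z * cnj z = complex_of_real (1 - \<rho>\<^sup>2)"
        by (simp add: z_def complex_eq_iff power2_eq_square algebra_simps sc)
      moreover have "(1 - z) * (1 - cnj z) = complex_of_real (1 - 2 * \<rho> * cos t + \<rho>\<^sup>2)"
        by (simp add: z_def complex_eq_iff power2_eq_square algebra_simps sc)
      ultimately show ?thesis
        by simp
    qed
    finally show ?thesis
      by (simp add: poisson_kernel_def)
  qed
  ultimately show ?thesis
    by (simp add: sums_iff)
qed

lemma suminf_mult_cis:
  assumes "summable (\<lambda>m. norm (c m))"
  shows "(\<Sum>m. c m * cis (a m)) * cis b = (\<Sum>m. c m * cis (a m + b))"
proof -
  have "summable (\<lambda>m. c m * cis (a m))"
    by (rule summable_norm_cancel, rule summable_comparison_test'[OF assms]) (simp add: norm_mult)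
  then show ?thesis
    by (simp add: suminf_mult2 mult.assoc cis_mult)
qed

lemma has_integral_poisson_kernel_cis:
  assumes \<rho>: "0 \<le> \<rho>" "\<rho> < 1"
  shows "((\<lambda>x. of_real (poisson_kernel \<rho> (\<theta> - x)) * cis (real k * x)) has_integral
           complex_of_real (2 * pi) * (of_real (\<rho> ^ k) * cis (real k * \<theta>))) {-pi..pi}"
proof -
  define c where "c m = complex_of_real (\<rho> ^ m) * cis (real m * \<theta>)" for m
  define d where "d m = complex_of_real (\<rho> ^ Suc m) * cis (- (real (Suc m) * \<theta>))" for m
  have "summable (\<lambda>m. \<rho> ^ m)"
    using \<rho> by (simp add: summable_geometric)
  then have c: "summable (\<lambda>m. norm (c m))" and d: "summable (\<lambda>m. norm (d m))"
    using \<rho> summable_ignore_initial_segment[of "\<lambda>m. \<rho> ^ m" 1]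
    by (simp_all add: c_def d_def norm_mult norm_power)
  have "of_real (poisson_kernel \<rho> (\<theta> - x)) * cis (real k * x)
      = (\<Sum>m. c m * cis (of_int (int k - int m) * x)) + (\<Sum>m. d m * cis (of_int (int k + int (Suc m)) * x))"
    for x
  proof -
    have "(\<lambda>m. complex_of_real (\<rho> ^ m) * cis (real m * (\<theta> - x))) = (\<lambda>m. c m * cis (- (real m * x)))"
      and "(\<lambda>m. complex_of_real (\<rho> ^ Suc m) * cis (- (real (Suc m) * (\<theta> - x))))
         = (\<lambda>m. d m * cis (real (Suc m) * x))"
      by (simp_all add: fun_eq_iff c_def d_def mult.assoc cis_mult algebra_simps)
    then have "of_real (poisson_kernel \<rho> (\<theta> - x)) * cis (real k * x)
        = (\<Sum>m. c m * cis (- (real m * x))) * cis (real k * x) + (\<Sum>m. d m * cis (real (Suc m) * x)) * cis (real k * x)"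
      using poisson_kernel_geometric_expansion[OF \<rho>, of "\<theta> - x"] by (simp add: distrib_right)
    also have "\<dots> = (\<Sum>m. c m * cis (- (real m * x) + real k * x)) + (\<Sum>m. d m * cis (real (Suc m) * x + real k * x))"
      by (simp only: suminf_mult_cis c d)
    finally show ?thesis
      by (simp add: algebra_simps)
  qed
  moreover have "(\<Sum>m. c m * (if int k - int m = 0 then complex_of_real (2 * pi) else 0))
      = complex_of_real (2 * pi) * c k"
    by (subst suminf_finite[of "{k}"]) auto
  ultimately show ?thesis
    using has_integral_add[OF has_integral_cis_series[OF c, of "\<lambda>m. int k - int m"]
        has_integral_cis_series[OF d, of "\<lambda>m. int k + int (Suc m)"]]
    by (simp add: c_def)
qed

lemma has_integral_poisson_kernel_trig_series:
  assumes c: "summable (\<lambda>k. norm (c k))" and \<rho>: "0 \<le> \<rho>" "\<rho> < 1"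
  shows "((\<lambda>x. of_real (poisson_kernel \<rho> (\<theta> - x)) * trig_series c x) has_integral
           complex_of_real (2 * pi) * trig_series (\<lambda>k. c k * of_real (\<rho> ^ k)) \<theta>) {-pi..pi}"
proof -
  define B where "B = (1 - \<rho>\<^sup>2) / (1 - \<rho>)\<^sup>2"
  define u where "u k x = c k * (of_real (poisson_kernel \<rho> (\<theta> - x)) * cis (real k * x))" for k x
  have "((\<lambda>x. \<Sum>k. u k x) has_integral
          (\<Sum>k. complex_of_real (2 * pi) * (c k * of_real (\<rho> ^ k) * cis (real k * \<theta>)))) {-pi..pi}"
  proof (rule has_integral_suminf[where M = "\<lambda>k. norm (c k) * B"])
    show "norm (u k x) \<le> norm (c k) * B" for k x
    proof -
      have "poisson_kernel \<rho> (\<theta> - x) \<le> B"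
        unfolding B_def by (rule poisson_kernel_le[OF \<rho>])
      then show ?thesis
        using poisson_kernel_nonneg[OF \<rho>, of "\<theta> - x"] by (simp add: u_def norm_mult mult_left_mono)
    qed
    show "continuous_on {-pi..pi} (u k)" for k
      unfolding u_def by (intro continuous_intros continuous_on_poisson_kernel \<rho>)
    show "(u k has_integral complex_of_real (2 * pi) * (c k * of_real (\<rho> ^ k) * cis (real k * \<theta>))) {-pi..pi}"
      for k
      using has_integral_mult_right[OF has_integral_poisson_kernel_cis[OF \<rho>], of "c k" \<theta> k]
      unfolding u_def by (simp add: mult_ac)
  qed (rule summable_mult2[OF c])
  moreover have "(\<lambda>x. of_real (poisson_kernel \<rho> (\<theta> - x)) * trig_series c x) = (\<lambda>x. \<Sum>k. u k x)"
  proof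
    fix x
    have "of_real (poisson_kernel \<rho> (\<theta> - x)) * trig_series c x
        = (\<Sum>k. of_real (poisson_kernel \<rho> (\<theta> - x)) * (c k * cis (real k * x)))"
      unfolding trig_series_def by (rule suminf_mult[OF summable_trig_series[OF c], symmetric])
    then show "of_real (poisson_kernel \<rho> (\<theta> - x)) * trig_series c x = (\<Sum>k. u k x)"
      by (simp add: u_def mult_ac)
  qed
  moreover have "summable (\<lambda>k. norm (c k * of_real (\<rho> ^ k)))"
  proof (rule summable_comparison_test'[OF c])
    show "norm (norm (c k * of_real (\<rho> ^ k))) \<le> norm (c k)" for k
      using mult_left_le[OF power_le_one[OF \<rho>(1) less_imp_le[OF \<rho>(2)]] norm_ge_zero[of "c k"], of k]
      using \<rho> by (simp add: norm_mult norm_power)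
  qed
  then have "summable (\<lambda>k. c k * of_real (\<rho> ^ k) * cis (real k * \<theta>))"
    by (rule summable_trig_series)
  then have "(\<Sum>k. complex_of_real (2 * pi) * (c k * of_real (\<rho> ^ k) * cis (real k * \<theta>)))
      = complex_of_real (2 * pi) * trig_series (\<lambda>k. c k * of_real (\<rho> ^ k)) \<theta>"
    unfolding trig_series_def by (rule suminf_mult)
  ultimately show ?thesis
    by simp
qed

lemma integral_poisson_kernel:
  assumes "0 \<le> \<rho>" "\<rho> < 1"
  shows "integral {-pi..pi} (\<lambda>x. poisson_kernel \<rho> (\<theta> - x)) = 2 * pi"
proof -
  have "((\<lambda>x. Re (of_real (poisson_kernel \<rho> (\<theta> - x)) * cis (real 0 * x))) has_integral
      Re (complex_of_real (2 * pi) * (of_real (\<rho> ^ 0) * cis (real 0 * \<theta>)))) {-pi..pi}"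
    using has_integral_linear[OF has_integral_poisson_kernel_cis[OF assms, of \<theta> 0] bounded_linear_Re]
    by (simp add: o_def)
  then show ?thesis
    by (simp add: integral_unique)
qed

lemma integral_integral_poisson_kernel:
  assumes \<rho>: "0 \<le> \<rho>" "\<rho> < 1" and g: "continuous_on {-pi..pi} g"
  shows "integral {-pi..pi} (\<lambda>\<theta>. integral {-pi..pi} (\<lambda>x. poisson_kernel \<rho> (\<theta> - x) * g x))
    = 2 * pi * integral {-pi..pi} g"
proof -
  have "continuous_on (cbox (-pi, -pi) (pi, pi)) (\<lambda>(\<theta>, x). poisson_kernel \<rho> (\<theta> - x) * g x)"
    unfolding case_prod_beta
    by (intro continuous_intros continuous_on_poisson_kernel \<rho> continuous_on_compose2[OF g])
       (auto simp: cbox_Pair_eq)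
  then have "integral (cbox (-pi) pi) (\<lambda>\<theta>. integral (cbox (-pi) pi) (\<lambda>x. poisson_kernel \<rho> (\<theta> - x) * g x))
      = integral (cbox (-pi) pi) (\<lambda>x. integral (cbox (-pi) pi) (\<lambda>\<theta>. poisson_kernel \<rho> (\<theta> - x) * g x))"
    by (rule integral_swap_continuous)
  then have "integral {-pi..pi} (\<lambda>\<theta>. integral {-pi..pi} (\<lambda>x. poisson_kernel \<rho> (\<theta> - x) * g x))
      = integral {-pi..pi} (\<lambda>x. integral {-pi..pi} (\<lambda>\<theta>. poisson_kernel \<rho> (\<theta> - x)) * g x)"
    by (simp only: interval_cbox integral_mult_left)
  also have "\<dots> = integral {-pi..pi} (\<lambda>x. 2 * pi * g x)"
  proof -
    have "poisson_kernel \<rho> (\<theta> - x) = poisson_kernel \<rho> (x - \<theta>)" for x \<theta>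
      using poisson_kernel_minus[of \<rho> "x - \<theta>"] by simp
    then show ?thesis
      using integral_poisson_kernel[OF \<rho>] by simp
  qed
  finally show ?thesis
    by simp
qed

lemma continuous_on_poisson_integral:
  assumes \<rho>: "0 \<le> \<rho>" "\<rho> < 1" and g: "continuous_on {-pi..pi} g"
  shows "continuous_on A (\<lambda>\<theta>. integral {-pi..pi} (\<lambda>x. poisson_kernel \<rho> (\<theta> - x) * g x))"
proof -
  have "continuous_on (A \<times> cbox (-pi) pi) (\<lambda>(\<theta>, x). poisson_kernel \<rho> (\<theta> - x) * g x)"
    unfolding case_prod_beta
    by (intro continuous_intros continuous_on_poisson_kernel \<rho> continuous_on_compose2[OF g]) auto
  then have "continuous_on A (\<lambda>\<theta>. integral (cbox (-pi) pi) (\<lambda>x. poisson_kernel \<rho> (\<theta> - x) * g x))"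
    by (rule integral_continuous_on_param)
  then show ?thesis
    unfolding interval_cbox .
qed

section \<open>Jensen's inequality for the power function\<close>

lemma powr_above_tangent:
  fixes a t p :: real
  assumes a: "0 \<le> a" and t: "0 \<le> t" and p: "1 \<le> p"
  shows "a powr p + p * a powr (p - 1) * (t - a) \<le> t powr p"
proof (cases "a = 0 \<or> t = 0")
  case True
  have "a powr (p - 1) * a = a powr p"
    using powr_mult_base[OF a, of "p - 1"] by (simp add: mult.commute)
  then have "a powr p + p * a powr (p - 1) * (0 - a) = (1 - p) * a powr p"
    by (simp add: algebra_simps)
  also have "\<dots> \<le> 0"
    using p by (simp add: mult_nonpos_nonneg)
  finally show ?thesis
    using True by auto
next
  case False
  then have "0 < a" "0 < t"
    using a t by auto
  then have deriv: "((\<lambda>x. x powr p) has_field_derivative p * a powr (p - 1)) (at a within {0<..})"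
    by (intro has_field_derivative_at_within[OF has_real_derivative_powr])
  have "p * a powr (p - 1) * (t - a) \<le> t powr p - a powr p"
    by (rule convex_on_imp_above_tangent[OF powr_convex[OF p] connected_Ioi _ _ deriv])
       (use \<open>0 < a\<close> \<open>0 < t\<close> in \<open>auto simp: interior_open\<close>)
  then show ?thesis
    by simp
qed

lemma jensen_integral_powr:
  fixes w h :: "real \<Rightarrow> real"
  assumes w: "continuous_on {a..b} w" and h: "continuous_on {a..b} h"
    and w_nonneg: "\<And>x. x \<in> {a..b} \<Longrightarrow> 0 \<le> w x" and h_nonneg: "\<And>x. x \<in> {a..b} \<Longrightarrow> 0 \<le> h x"
    and w_integral: "integral {a..b} w = 1" and p: "1 \<le> p"
  shows "(integral {a..b} (\<lambda>x. w x * h x)) powr p \<le> integral {a..b} (\<lambda>x. w x * h x powr p)"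
proof -
  define A where "A = integral {a..b} (\<lambda>x. w x * h x)"
  define D where "D = p * A powr (p - 1)"
  have w_int: "(w has_integral 1) {a..b}"
    using w_integral integrable_continuous_real[OF w] by (metis has_integral_integrable_integral)
  have wh_int: "((\<lambda>x. w x * h x) has_integral A) {a..b}"
    unfolding A_def by (intro integrable_integral integrable_continuous_real continuous_intros w h)
  have "0 \<le> A"
    unfolding A_def using wh_int w_nonneg h_nonneg by (intro integral_nonneg) auto
  have "((\<lambda>x. (A powr p - D * A) * w x + D * (w x * h x)) has_integral ((A powr p - D * A) * 1 + D * A))
      {a..b}"
    by (intro has_integral_add has_integral_mult_right w_int wh_int)
  moreover have "(\<lambda>x. (A powr p - D * A) * w x + D * (w x * h x)) = (\<lambda>x. w x * (A powr p + D * (h x - A)))"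
    by (simp add: fun_eq_iff algebra_simps)
  ultimately have tangent_int: "((\<lambda>x. w x * (A powr p + D * (h x - A))) has_integral A powr p) {a..b}"
    by simp
  have "(\<lambda>x. w x * h x powr p) integrable_on {a..b}"
    using h h_nonneg p by (intro integrable_continuous_real continuous_intros w continuous_on_powr') auto
  moreover have "w x * (A powr p + D * (h x - A)) \<le> w x * h x powr p" if "x \<in> {a..b}" for x
    using powr_above_tangent[OF \<open>0 \<le> A\<close> h_nonneg[OF that] p] w_nonneg[OF that]
    by (intro mult_left_mono) (auto simp: D_def)
  ultimately have "integral {a..b} (\<lambda>x. w x * (A powr p + D * (h x - A))) \<le> integral {a..b} (\<lambda>x. w x * h x powr p)"
    using tangent_int by (intro integral_le) auto
  then show ?thesis
    unfolding A_def[symmetric] integral_unique[OF tangent_int] .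
qed

lemma Lim_at_left_one_mono:
  fixes h :: "real \<Rightarrow> real"
  assumes mono: "\<And>x y. 0 \<le> x \<Longrightarrow> x \<le> y \<Longrightarrow> y < 1 \<Longrightarrow> h x \<le> h y"
  shows "Lim (at_left 1) (\<lambda>r. ereal (h r)) = (SUP r\<in>{0..<1}. ereal (h r))"
proof (rule tendsto_Lim[OF trivial_limit_at_left_real], rule order_tendstoI)
  fix c
  assume "c < (SUP r\<in>{0..<1}. ereal (h r))"
  then obtain r where r: "r \<in> {0..<1}" "c < ereal (h r)"
    by (auto simp: less_SUP_iff)
  have "eventually (\<lambda>x. x \<in> {r<..<1}) (at_left (1::real))"
    using r by (intro eventually_at_left_real) auto
  then show "eventually (\<lambda>x. c < ereal (h x)) (at_left 1)"
    by eventually_elim (use r mono in \<open>fastforce intro: less_le_trans\<close>)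
next
  fix c
  assume c: "(SUP r\<in>{0..<1}. ereal (h r)) < c"
  have "eventually (\<lambda>x. x \<in> {0<..<1}) (at_left (1::real))"
    by (intro eventually_at_left_real) auto
  then show "eventually (\<lambda>x. ereal (h x) < c) (at_left 1)"
  proof eventually_elim
    case (elim x)
    then have "ereal (h x) \<le> (SUP r\<in>{0..<1}. ereal (h r))"
      by (intro SUP_upper) auto
    then show ?case
      using c by simp
  qed
qed

lemma le_if_mult_power_le:
  fixes x H :: real
  assumes "\<And>r. 0 < r \<Longrightarrow> r < 1 \<Longrightarrow> x * r ^ n \<le> H"
  shows "x \<le> H"
proof -
  have "((\<lambda>r. x * r ^ n) \<longlongrightarrow> x * 1 ^ n) (at_left (1::real))"
    by (intro tendsto_intros)
  moreover have "eventually (\<lambda>r. r \<in> {0<..<1}) (at_left (1::real))"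
    by (intro eventually_at_left_real) auto
  then have "eventually (\<lambda>r. x * r ^ n \<le> H) (at_left (1::real))"
    by eventually_elim (auto intro: assms)
  ultimately show ?thesis
    using tendsto_upperbound[OF _ _ trivial_limit_at_left_real] by fastforce
qed

section \<open>Pairs of complex numbers and the splitting of a quaternion\<close>

text \<open>The slice through quat_i is identified with the complex plane via quat_of_complex, and every
  quaternion splits as q = quat_of_complex (quat_z1 q) + quat_of_complex (quat_z2 q) * quat_j.\<close>

definition quat_of_complex :: "complex \<Rightarrow> quat" where
  "quat_of_complex w = Quat (Re w) (Im w) 0 0"

definition quat_z1 :: "quat \<Rightarrow> complex" where
  "quat_z1 q = Complex (QRe q) (QI q)"

definition quat_z2 :: "quat \<Rightarrow> complex" where
  "quat_z2 q = Complex (QJ q) (QK q)"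

lemma quat_of_complex_power: "quat_of_complex (w ^ k) = quat_of_complex w ^ k"
  by (induction k) (simp_all add: quat_of_complex_def quat_eq_iff)

lemma norm_quat_of_complex: "norm (quat_of_complex w) = cmod w"
  by (simp add: quat_of_complex_def norm_quat_def cmod_def)

lemma quat_z1_mult_quat_of_complex: "quat_z1 (quat_of_complex w * q) = w * quat_z1 q"
  by (simp add: quat_of_complex_def quat_z1_def complex_eq_iff)

lemma quat_z2_mult_quat_of_complex: "quat_z2 (quat_of_complex w * q) = w * quat_z2 q"
  by (simp add: quat_of_complex_def quat_z2_def complex_eq_iff algebra_simps)

lemma bounded_linear_quat_z1: "bounded_linear quat_z1"
  by (rule bounded_linear_intro[where K=1])
     (auto simp: quat_z1_def norm_quat_def cmod_def complex_eq_iff intro!: real_sqrt_le_mono)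

lemma bounded_linear_quat_z2: "bounded_linear quat_z2"
  by (rule bounded_linear_intro[where K=1])
     (auto simp: quat_z2_def norm_quat_def cmod_def complex_eq_iff intro!: real_sqrt_le_mono)

lemma norm_quat_z1_z2: "norm q = sqrt ((cmod (quat_z1 q))\<^sup>2 + (cmod (quat_z2 q))\<^sup>2)"
  by (simp add: norm_quat_def quat_z1_def quat_z2_def cmod_def add.assoc)

lemma slice_circle_eq_quat_of_complex:
  "r *\<^sub>R (of_real (cos \<theta>) + quat_i * of_real (sin \<theta>)) = quat_of_complex (complex_of_real r * cis \<theta>)"
  by (simp add: quat_eq_iff quat_of_complex_def quat_i_def of_real_def)

lemma cauchy_schwarz_two_terms:
  fixes x y a b :: real
  shows "x * a + y * b \<le> sqrt ((x\<^sup>2 + y\<^sup>2) * (a\<^sup>2 + b\<^sup>2))"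
proof (rule real_le_rsqrt)
  have "(x\<^sup>2 + y\<^sup>2) * (a\<^sup>2 + b\<^sup>2) - (x * a + y * b)\<^sup>2 = (x * b - y * a)\<^sup>2"
    by (simp add: power2_eq_square algebra_simps)
  then show "(x * a + y * b)\<^sup>2 \<le> (x\<^sup>2 + y\<^sup>2) * (a\<^sup>2 + b\<^sup>2)"
    by (metis diff_ge_0_iff_ge zero_le_power2)
qed

lemma complex_pair_norming_functional:
  fixes A B :: complex
  obtains u v where "\<And>X Y. cmod (cnj u * X + cnj v * Y) \<le> sqrt ((cmod X)\<^sup>2 + (cmod Y)\<^sup>2)"
    and "cnj u * A + cnj v * B = complex_of_real (sqrt ((cmod A)\<^sup>2 + (cmod B)\<^sup>2))"
proof (cases "A = 0 \<and> B = 0")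
  case True
  then show ?thesis
    by (intro that[of 0 0]) simp_all
next
  case False
  define D where "D = sqrt ((cmod A)\<^sup>2 + (cmod B)\<^sup>2)"
  have "0 < (cmod A)\<^sup>2 + (cmod B)\<^sup>2"
    using False by (auto intro: add_pos_nonneg add_nonneg_pos)
  then have "0 < D"
    by (simp add: D_def)
  have D2: "D\<^sup>2 = (cmod A)\<^sup>2 + (cmod B)\<^sup>2"
    by (simp add: D_def)
  define u where "u = A / of_real D"
  define v where "v = B / of_real D"
  show ?thesis
  proof (rule that[of u v])
    fix X Y
    have "cmod (cnj u * X + cnj v * Y) \<le> cmod u * cmod X + cmod v * cmod Y"
      by (metis complex_mod_cnj norm_mult norm_triangle_ineq)
    also have "\<dots> \<le> sqrt (((cmod u)\<^sup>2 + (cmod v)\<^sup>2) * ((cmod X)\<^sup>2 + (cmod Y)\<^sup>2))"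
      by (rule cauchy_schwarz_two_terms)
    also have "(cmod u)\<^sup>2 + (cmod v)\<^sup>2 = 1"
      using \<open>0 < D\<close> D2 False by (simp add: u_def v_def norm_divide power_divide add_divide_distrib[symmetric])
    finally show "cmod (cnj u * X + cnj v * Y) \<le> sqrt ((cmod X)\<^sup>2 + (cmod Y)\<^sup>2)"
      by simp
  next
    have "cnj u * A + cnj v * B = (A * cnj A + B * cnj B) / of_real D"
      by (simp add: u_def v_def field_simps add_divide_distrib)
    also have "A * cnj A + B * cnj B = of_real ((cmod A)\<^sup>2 + (cmod B)\<^sup>2)"
      by (simp only: of_real_add complex_norm_square)
    also have "of_real ((cmod A)\<^sup>2 + (cmod B)\<^sup>2) / of_real D = complex_of_real (D\<^sup>2 / D)"
      by (simp only: D2 of_real_divide)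
    also have "D\<^sup>2 / D = D"
      using \<open>0 < D\<close> by (simp add: power2_eq_square)
    finally show "cnj u * A + cnj v * B = of_real (sqrt ((cmod A)\<^sup>2 + (cmod B)\<^sup>2))"
      by (simp add: D_def)
  qed
qed

section \<open>Integral means of a slice regular function\<close>

locale slice_power_series =
  fixes f :: "quat \<Rightarrow> quat" and a :: "nat \<Rightarrow> quat"
  assumes power_series: "\<forall>q\<in>qball. (\<lambda>n. q ^ n * a n) sums f q"
begin

definition z1_coeff :: "real \<Rightarrow> nat \<Rightarrow> complex" where
  "z1_coeff s k = quat_z1 (a k) * of_real (s ^ k)"

definition z2_coeff :: "real \<Rightarrow> nat \<Rightarrow> complex" where
  "z2_coeff s k = quat_z2 (a k) * of_real (s ^ k)"

definition circle_norm :: "real \<Rightarrow> real \<Rightarrow> real" where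
  "circle_norm s \<theta> = norm (f (quat_of_complex (of_real s * cis \<theta>)))"

definition mean :: "real \<Rightarrow> real \<Rightarrow> real" where
  "mean p s = integral {-pi..pi} (\<lambda>\<theta>. circle_norm s \<theta> powr p) / (2 * pi)"

lemma sums_quat_z1_z2:
  assumes "cmod w < 1"
  shows "(\<lambda>k. quat_z1 (a k) * w ^ k) sums quat_z1 (f (quat_of_complex w))"
    and "(\<lambda>k. quat_z2 (a k) * w ^ k) sums quat_z2 (f (quat_of_complex w))"
proof -
  have "(\<lambda>n. quat_of_complex w ^ n * a n) sums f (quat_of_complex w)"
    using power_series assms by (simp add: qball_def norm_quat_of_complex)
  from bounded_linear.sums[OF bounded_linear_quat_z1 this] bounded_linear.sums[OF bounded_linear_quat_z2 this]
  show "(\<lambda>k. quat_z1 (a k) * w ^ k) sums quat_z1 (f (quat_of_complex w))"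
    and "(\<lambda>k. quat_z2 (a k) * w ^ k) sums quat_z2 (f (quat_of_complex w))"
    by (simp_all add: quat_z1_mult_quat_of_complex quat_z2_mult_quat_of_complex mult.commute
        flip: quat_of_complex_power)
qed

lemma summable_z_coeff:
  assumes "0 \<le> s" "s < 1"
  shows "summable (\<lambda>k. norm (z1_coeff s k))" and "summable (\<lambda>k. norm (z2_coeff s k))"
proof -
  define w where "w = complex_of_real ((1 + s) / 2)"
  have "cmod w = (1 + s) / 2"
    unfolding w_def norm_of_real using assms by simp
  then have w: "cmod w < 1" "cmod (complex_of_real s) < cmod w"
    using assms by auto
  show "summable (\<lambda>k. norm (z1_coeff s k))" "summable (\<lambda>k. norm (z2_coeff s k))"
    using powser_insidea[OF sums_summable[OF sums_quat_z1_z2(1)[OF w(1)]] w(2)]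
      powser_insidea[OF sums_summable[OF sums_quat_z1_z2(2)[OF w(1)]] w(2)]
    by (simp_all add: z1_coeff_def z2_coeff_def of_real_power)
qed

lemma trig_series_z_coeff:
  assumes "0 \<le> s" "s < 1"
  shows "trig_series (z1_coeff s) \<theta> = quat_z1 (f (quat_of_complex (of_real s * cis \<theta>)))"
    and "trig_series (z2_coeff s) \<theta> = quat_z2 (f (quat_of_complex (of_real s * cis \<theta>)))"
proof -
  have w: "cmod (complex_of_real s * cis \<theta>) < 1"
    using assms by (simp add: norm_mult)
  have "(complex_of_real s * cis \<theta>) ^ k = of_real (s ^ k) * cis (real k * \<theta>)" for k
    by (simp add: power_mult_distrib Complex.DeMoivre)
  then show "trig_series (z1_coeff s) \<theta> = quat_z1 (f (quat_of_complex (of_real s * cis \<theta>)))"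
    and "trig_series (z2_coeff s) \<theta> = quat_z2 (f (quat_of_complex (of_real s * cis \<theta>)))"
    using sums_quat_z1_z2[OF w] by (simp_all add: trig_series_def z1_coeff_def z2_coeff_def sums_iff mult.assoc)
qed

lemma circle_norm_eq:
  assumes "0 \<le> s" "s < 1"
  shows "circle_norm s \<theta> = sqrt ((cmod (trig_series (z1_coeff s) \<theta>))\<^sup>2 + (cmod (trig_series (z2_coeff s) \<theta>))\<^sup>2)"
  unfolding circle_norm_def trig_series_z_coeff[OF assms] by (rule norm_quat_z1_z2)

lemma continuous_on_circle_norm:
  assumes "0 \<le> s" "s < 1"
  shows "continuous_on A (circle_norm s)"
  unfolding circle_norm_eq[OF assms, abs_def]
  by (intro continuous_intros continuous_on_trig_series summable_z_coeff assms)

lemma circle_norm_nonneg: "0 \<le> circle_norm s \<theta>"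
  by (simp add: circle_norm_def)

lemma trig_series_norming_le_circle_norm:
  assumes s: "0 \<le> s" "s < 1"
    and uv: "\<And>X Y. cmod (cnj u * X + cnj v * Y) \<le> sqrt ((cmod X)\<^sup>2 + (cmod Y)\<^sup>2)"
  shows "summable (\<lambda>k. norm (cnj u * z1_coeff s k + cnj v * z2_coeff s k))"
    and "norm (trig_series (\<lambda>k. cnj u * z1_coeff s k + cnj v * z2_coeff s k) x) \<le> circle_norm s x"
  using trig_series_linear[OF summable_z_coeff[OF s]] uv by (simp_all add: circle_norm_eq[OF s])

lemma norm_coeff_le_integral_circle_norm:
  assumes r: "0 \<le> r" "r < 1"
  shows "norm (a n) * r ^ n \<le> integral {-pi..pi} (circle_norm r) / (2 * pi)"
proof -
  obtain u v where uv: "\<And>X Y. cmod (cnj u * X + cnj v * Y) \<le> sqrt ((cmod X)\<^sup>2 + (cmod Y)\<^sup>2)"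
    and uv_a: "cnj u * quat_z1 (a n) + cnj v * quat_z2 (a n) = of_real (norm (a n))"
    unfolding norm_quat_z1_z2[of "a n"] using complex_pair_norming_functional by blast
  define c where "c k = cnj u * z1_coeff r k + cnj v * z2_coeff r k" for k
  note c = trig_series_norming_le_circle_norm[OF r uv, folded c_def]
  have "c n = (cnj u * quat_z1 (a n) + cnj v * quat_z2 (a n)) * of_real (r ^ n)"
    by (simp add: c_def z1_coeff_def z2_coeff_def algebra_simps)
  then have "c n = of_real (norm (a n) * r ^ n)"
    by (simp add: uv_a)
  moreover have int: "((\<lambda>x. cis (- (real n * x)) * trig_series c x) has_integral
      complex_of_real (2 * pi) * c n) {-pi..pi}"
    by (rule has_integral_trig_series_coeff[OF c(1)])
  moreover have "norm (integral {-pi..pi} (\<lambda>x. cis (- (real n * x)) * trig_series c x))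
      \<le> integral {-pi..pi} (circle_norm r)"
    using int c(2)
    by (intro integral_norm_bound_integral integrable_continuous_real continuous_intros
          continuous_on_circle_norm continuous_on_trig_series r c(1))
       (auto simp: norm_mult)
  ultimately show ?thesis
    using r by (simp add: integral_unique norm_mult norm_power field_simps)
qed

text \<open>Testing the values of (quat_z1 \<circ> f, quat_z2 \<circ> f) at \<rho> s e^(i\<theta>) against a norming unit vector
  reduces this vector-valued estimate to the scalar Poisson formula.\<close>

lemma circle_norm_le_poisson_integral:
  assumes \<rho>: "0 \<le> \<rho>" "\<rho> < 1" and s: "0 \<le> s" "s < 1"
  shows "circle_norm (\<rho> * s) \<theta> \<le> integral {-pi..pi} (\<lambda>x. poisson_kernel \<rho> (\<theta> - x) * circle_norm s x) / (2 * pi)"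
proof -
  have "\<rho> * s \<le> s"
    using \<rho> s by (simp add: mult_left_le_one_le)
  then have \<rho>s: "0 \<le> \<rho> * s" "\<rho> * s < 1"
    using \<rho> s by auto
  obtain u v where uv: "\<And>X Y. cmod (cnj u * X + cnj v * Y) \<le> sqrt ((cmod X)\<^sup>2 + (cmod Y)\<^sup>2)"
    and uv_f: "cnj u * trig_series (z1_coeff (\<rho> * s)) \<theta> + cnj v * trig_series (z2_coeff (\<rho> * s)) \<theta>
      = of_real (circle_norm (\<rho> * s) \<theta>)"
    unfolding circle_norm_eq[OF \<rho>s] using complex_pair_norming_functional by blast
  define c where "c k = cnj u * z1_coeff s k + cnj v * z2_coeff s k" for k
  note c = trig_series_norming_le_circle_norm[OF s uv, folded c_def]
  have "(\<lambda>k. c k * of_real (\<rho> ^ k)) = (\<lambda>k. cnj u * z1_coeff (\<rho> * s) k + cnj v * z2_coeff (\<rho> * s) k)"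
    by (simp add: fun_eq_iff c_def z1_coeff_def z2_coeff_def power_mult_distrib algebra_simps)
  then have "trig_series (\<lambda>k. c k * of_real (\<rho> ^ k)) \<theta> = of_real (circle_norm (\<rho> * s) \<theta>)"
    using trig_series_linear(2)[OF summable_z_coeff[OF \<rho>s]] uv_f by simp
  then have int: "((\<lambda>x. of_real (poisson_kernel \<rho> (\<theta> - x)) * trig_series c x) has_integral
      complex_of_real (2 * pi * circle_norm (\<rho> * s) \<theta>)) {-pi..pi}"
    using has_integral_poisson_kernel_trig_series[OF c(1) \<rho>, of \<theta>] by simp
  have "norm (integral {-pi..pi} (\<lambda>x. of_real (poisson_kernel \<rho> (\<theta> - x)) * trig_series c x))
      \<le> integral {-pi..pi} (\<lambda>x. poisson_kernel \<rho> (\<theta> - x) * circle_norm s x)"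
    using int c(2) poisson_kernel_nonneg[OF \<rho>]
    by (intro integral_norm_bound_integral integrable_continuous_real continuous_intros
          continuous_on_poisson_kernel \<rho> continuous_on_circle_norm s continuous_on_trig_series c(1))
       (auto simp: norm_mult intro: mult_left_mono)
  moreover have "norm (integral {-pi..pi} (\<lambda>x. of_real (poisson_kernel \<rho> (\<theta> - x)) * trig_series c x))
      = 2 * pi * circle_norm (\<rho> * s) \<theta>"
    unfolding integral_unique[OF int] norm_of_real using circle_norm_nonneg by simp
  ultimately show ?thesis
    by (simp add: field_simps)
qed

lemma continuous_on_circle_norm_powr:
  assumes "0 \<le> s" "s < 1" "1 \<le> p"
  shows "continuous_on A (\<lambda>x. circle_norm s x powr p)"
  using assms continuous_on_circle_norm[OF assms(1,2)] circle_norm_nonneg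
  by (intro continuous_on_powr') (auto intro: continuous_intros)

lemma circle_norm_powr_le_poisson_integral:
  assumes \<rho>: "0 \<le> \<rho>" "\<rho> < 1" and s: "0 \<le> s" "s < 1" and p: "1 \<le> p"
  shows "circle_norm (\<rho> * s) \<theta> powr p
    \<le> integral {-pi..pi} (\<lambda>x. poisson_kernel \<rho> (\<theta> - x) * circle_norm s x powr p) / (2 * pi)"
proof -
  define w where "w x = poisson_kernel \<rho> (\<theta> - x) / (2 * pi)" for x
  have w_cont: "continuous_on {-pi..pi} w"
    unfolding w_def by (intro continuous_intros continuous_on_poisson_kernel \<rho>) auto
  have "integral {-pi..pi} w = integral {-pi..pi} (\<lambda>x. poisson_kernel \<rho> (\<theta> - x)) / (2 * pi)"
    unfolding w_def by simp
  then have w_integral: "integral {-pi..pi} w = 1"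
    by (simp add: integral_poisson_kernel[OF \<rho>])
  have "(integral {-pi..pi} (\<lambda>x. w x * circle_norm s x)) powr p
      \<le> integral {-pi..pi} (\<lambda>x. w x * circle_norm s x powr p)"
    using poisson_kernel_nonneg[OF \<rho>] circle_norm_nonneg
    by (intro jensen_integral_powr[OF w_cont continuous_on_circle_norm[OF s] _ _ w_integral p])
       (auto simp: w_def)
  moreover have "circle_norm (\<rho> * s) \<theta> powr p \<le> (integral {-pi..pi} (\<lambda>x. w x * circle_norm s x)) powr p"
    using circle_norm_le_poisson_integral[OF \<rho> s, of \<theta>] circle_norm_nonneg p
    by (intro powr_mono2) (auto simp: w_def)
  ultimately show ?thesis
    by (simp add: w_def)
qed

lemma mean_mono:
  assumes p: "1 \<le> p" and rs: "0 \<le> r" "r \<le> s" "s < 1"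
  shows "mean p r \<le> mean p s"
proof (cases "r = s")
  case False
  define \<rho> where "\<rho> = r / s"
  have s: "0 \<le> s" "s < 1" and \<rho>: "0 \<le> \<rho>" "\<rho> < 1" and r_eq: "r = \<rho> * s"
    using rs False by (auto simp: \<rho>_def divide_simps)
  define g where "g x = circle_norm s x powr p" for x
  have g: "continuous_on {-pi..pi} g"
    unfolding g_def by (rule continuous_on_circle_norm_powr[OF s p])
  have "integral {-pi..pi} (\<lambda>\<theta>. circle_norm r \<theta> powr p)
      \<le> integral {-pi..pi} (\<lambda>\<theta>. integral {-pi..pi} (\<lambda>x. poisson_kernel \<rho> (\<theta> - x) * g x) / (2 * pi))"
    using circle_norm_powr_le_poisson_integral[OF \<rho> s p] rs p unfolding r_eq g_def
    by (intro integral_le integrable_continuous_real continuous_on_circle_norm_powr continuous_on_divide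
          continuous_on_const continuous_on_poisson_integral[OF \<rho>] g[unfolded g_def]) auto
  also have "\<dots> = integral {-pi..pi} g"
    using integral_integral_poisson_kernel[OF \<rho> g] by simp
  finally show ?thesis
    by (simp add: mean_def g_def[abs_def] divide_right_mono)
qed simp

lemma integral_circle_norm_le_mean:
  assumes p: "1 \<le> p" and r: "0 \<le> r" "r < 1"
  shows "integral {-pi..pi} (circle_norm r) / (2 * pi) \<le> mean p r powr (1 / p)"
proof -
  have "0 \<le> integral {-pi..pi} (circle_norm r)"
    using circle_norm_nonneg by (intro integral_nonneg integrable_continuous_real continuous_on_circle_norm r) auto
  define X where "X = integral {-pi..pi} (circle_norm r) / (2 * pi)"
  have "0 \<le> X"
    unfolding X_def using \<open>0 \<le> integral {-pi..pi} (circle_norm r)\<close> by simp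
  have "X powr p \<le> mean p r"
    using jensen_integral_powr[OF continuous_on_const continuous_on_circle_norm[OF r], of "-pi" pi "1 / (2 * pi)" p]
      circle_norm_nonneg p \<open>0 \<le> integral {-pi..pi} (circle_norm r)\<close>
    by (simp add: X_def mean_def)
  then have "(X powr p) powr (1 / p) \<le> mean p r powr (1 / p)"
    using p \<open>0 \<le> X\<close> by (intro powr_mono2) auto
  then show ?thesis
    using p \<open>0 \<le> X\<close> by (simp add: powr_powr X_def[symmetric])
qed

lemma integral_mean_quat_i: "integral_mean p f quat_i r = mean p r powr (1 / p)"
  unfolding integral_mean_def mean_def circle_norm_def slice_circle_eq_quat_of_complex by simp

lemma mean_nonneg:
  assumes "0 \<le> s" "s < 1" "1 \<le> p"
  shows "0 \<le> mean p s"
  unfolding mean_def using circle_norm_nonneg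
  by (intro divide_nonneg_pos integral_nonneg integrable_continuous_real continuous_on_circle_norm_powr assms)
     auto

lemma norm_coeff_le_hardy_norm:
  assumes p: "1 \<le> p" and finite: "hardy_norm p f < \<infinity>"
  shows "norm (a n) \<le> real_of_ereal (hardy_norm p f)"
proof -
  define h where "h r = integral_mean p f quat_i r" for r
  have "h x \<le> h y" if "0 \<le> x" "x \<le> y" "y < 1" for x y
    unfolding h_def integral_mean_quat_i
    using mean_mono[OF p that] mean_nonneg[of x p] that p by (intro powr_mono2) auto
  then have "Lim (at_left 1) (\<lambda>r. ereal (h r)) = (SUP r\<in>{0..<1}. ereal (h r))"
    by (rule Lim_at_left_one_mono)
  then have h_le: "ereal (h r) \<le> hardy_norm p f" if "r \<in> {0..<1}" for r
    using SUP_upper[OF that, of "\<lambda>r. ereal (h r)"] SUP_upper[OF quat_i_imag_unit,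
        of "\<lambda>I. Lim (at_left 1) (\<lambda>r. ereal (integral_mean p f I r))"]
    unfolding hardy_norm_def h_def by simp
  have "0 \<le> h 0"
    by (simp add: h_def integral_mean_def)
  then have "hardy_norm p f = ereal (real_of_ereal (hardy_norm p f))"
    using h_le[of 0] finite by (cases "hardy_norm p f") auto
  then have h_le_real: "h r \<le> real_of_ereal (hardy_norm p f)" if "r \<in> {0..<1}" for r
    using h_le[OF that] by (metis ereal_less_eq(3))
  show ?thesis
  proof (rule le_if_mult_power_le)
    fix r :: real
    assume r: "0 < r" "r < 1"
    then have "norm (a n) * r ^ n \<le> integral {-pi..pi} (circle_norm r) / (2 * pi)"
      by (intro norm_coeff_le_integral_circle_norm) auto
    also have "\<dots> \<le> h r"
      unfolding h_def integral_mean_quat_i using p r by (intro integral_circle_norm_le_mean) auto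
    also have "\<dots> \<le> real_of_ereal (hardy_norm p f)"
      using r by (intro h_le_real) auto
    finally show "norm (a n) * r ^ n \<le> real_of_ereal (hardy_norm p f)" .
  qed
qed

lemma norm_coeff_le_hardy_norm_inf:
  assumes finite: "hardy_norm_inf f < \<infinity>"
  shows "norm (a n) \<le> real_of_ereal (hardy_norm_inf f)"
proof -
  define H where "H = real_of_ereal (hardy_norm_inf f)"
  have le: "ereal (norm (f q)) \<le> hardy_norm_inf f" if "q \<in> qball" for q
    unfolding hardy_norm_inf_def using that by (rule SUP_upper)
  then have "hardy_norm_inf f = ereal H"
    using le[of 0] finite unfolding H_def by (cases "hardy_norm_inf f") (auto simp: qball_def)
  then have f_le: "norm (f q) \<le> H" if "q \<in> qball" for q
    using le[OF that] by simp
  show ?thesis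
    unfolding H_def[symmetric]
  proof (rule le_if_mult_power_le)
    fix r :: real
    assume r: "0 < r" "r < 1"
    then have "norm (a n) * r ^ n \<le> integral {-pi..pi} (circle_norm r) / (2 * pi)"
      by (intro norm_coeff_le_integral_circle_norm) auto
    also have "\<dots> \<le> integral {-pi..pi} (\<lambda>x. H) / (2 * pi)"
      using r f_le
      by (intro divide_right_mono integral_le integrable_continuous_real continuous_on_circle_norm)
         (auto simp: circle_norm_def qball_def norm_quat_of_complex norm_mult)
    finally show "norm (a n) * r ^ n \<le> H"
      by simp
  qed
qed

end

lemma cauchy_constant_ge_one:
  assumes "1 \<le> p"
  shows "1 \<le> sqrt 2 * exp (1 / p) * (1 + real n * p / 2) powr (1 / p)"
proof -
  have "1 \<le> (1 + real n * p / 2) powr (1 / p)"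
    using assms by (intro ge_one_powr_ge_zero) auto
  moreover have "1 \<le> sqrt 2 * exp (1 / p)"
    using assms mult_mono[of 1 "sqrt 2" 1 "exp (1 / p)"] by simp
  ultimately show ?thesis
    using mult_mono[of 1 "sqrt 2 * exp (1 / p)" 1] by simp
qed

theorem lemma8p3:
  fixes f :: "quat \<Rightarrow> quat" and n :: nat
  assumes "slice_regular_ball f"
  shows "(\<forall>p::real. 1 \<le> p \<longrightarrow> hardy_norm p f < \<infinity> \<longrightarrow>
            norm ((slice_deriv ^^ n) f 0)
              \<le> sqrt 2 * fact n * exp (1 / p) * (1 + real n * p / 2) powr (1 / p)
                 * real_of_ereal (hardy_norm p f))
       \<and> (hardy_norm_inf f < \<infinity> \<longrightarrow>
            norm ((slice_deriv ^^ n) f 0) \<le> fact n * real_of_ereal (hardy_norm_inf f))"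
proof -
  obtain a where a: "\<forall>q\<in>qball. (\<lambda>n. q ^ n * a n) sums f q"
    using assms unfolding slice_regular_ball_def by blast
  interpret slice_power_series f a
    by unfold_locales (rule a)
  have deriv: "norm ((slice_deriv ^^ n) f 0) = fact n * norm (a n)"
    using slice_deriv_funpow_zero[OF a, of n] by simp
  show ?thesis
  proof (intro conjI allI impI)
    fix p :: real
    assume p: "1 \<le> p" and finite: "hardy_norm p f < \<infinity>"
    define H where "H = real_of_ereal (hardy_norm p f)"
    have coeff_le: "norm (a n) \<le> H"
      unfolding H_def by (rule norm_coeff_le_hardy_norm[OF p finite])
    have "0 \<le> H"
      using coeff_le norm_ge_zero[of "a n"] by linarith
    have "norm ((slice_deriv ^^ n) f 0) \<le> 1 * (fact n * H)"
      using coeff_le by (simp add: deriv)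
    also have "\<dots> \<le> sqrt 2 * exp (1 / p) * (1 + real n * p / 2) powr (1 / p) * (fact n * H)"
      using \<open>0 \<le> H\<close> by (intro mult_right_mono cauchy_constant_ge_one p) auto
    finally show "norm ((slice_deriv ^^ n) f 0)
        \<le> sqrt 2 * fact n * exp (1 / p) * (1 + real n * p / 2) powr (1 / p) * real_of_ereal (hardy_norm p f)"
      by (simp add: H_def mult_ac)
  next
    assume "hardy_norm_inf f < \<infinity>"
    then show "norm ((slice_deriv ^^ n) f 0) \<le> fact n * real_of_ereal (hardy_norm_inf f)"
      using norm_coeff_le_hardy_norm_inf by (simp add: deriv)
  qed
qed

end
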